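(* Let $n\ge4$, let $(e_i)_{i=0}^n$ be the standard unit vector basis of the Euclidean space $\ell_2^{n+1}$, let $M=\sqrt{(2/\ln 2)\,n\log_2 n}$, and let $$A=\Bigl\{M\sum_{i=1}^n t_ie_i+E_{n-1}(t_1,\dots,t_n)\,e_0:\ (t_1,\dots,t_n)\in\Delta_{n-1}\Bigr\}.$$ Then $A$ is approximately convex, $$\mathcal{H}(A,\operatorname{Co}(A))=\log_2 n,\qquad\text{and}\qquad\operatorname{diam}(A)\le\frac{2}{\sqrt{\ln 2}}\sqrt{n\log_2 n}+\log_2 n .$$
   Context: $\Delta_{n-1}=\{(t_1,\dots,t_n): t_i\ge0,\sum_i t_i=1\}$, and $E_{n-1}(t_1,\dots,t_n)=\sum_{i=1}^n t_i\log_2(1/t_i)$ with $0\log_2(1/0)=0$. A set $A$ is approximately convex if $d(tx+(1-t)y,A)\le1$ for all $x,y\in A$, $t\in[0,1]$, where $d(x,A)=\inf_{a\in A}\|x-a\|$. $\mathcal{H}$ is the Hausdorff distance, $\operatorname{Co}$ the convex hull, $\operatorname{diam}(A)=\sup\{\|x-y\|:x,y\in A\}$. *)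

theory Defs
  imports "HOL-Analysis.Analysis"
begin

definition std_simplex :: "nat \<Rightarrow> (nat \<Rightarrow> real) set" where
  "std_simplex n = {t. (\<forall>i\<in>{1..n}. 0 \<le> t i) \<and> (\<Sum>i=1..n. t i) = 1}"

definition entropy :: "nat \<Rightarrow> (nat \<Rightarrow> real) \<Rightarrow> real" where
  "entropy n t = (\<Sum>i=1..n. if t i = 0 then 0 else t i * log 2 (1 / t i))"

definition approx_convex :: "'a::real_normed_vector set \<Rightarrow> bool" where
  "approx_convex A \<longleftrightarrow>
     (\<forall>x\<in>A. \<forall>y\<in>A. \<forall>t\<in>{0..1::real}. infdist (t *\<^sub>R x + (1 - t) *\<^sub>R y) A \<le> 1)"

text \<open>Hausdorff distance (for nonempty bounded sets).\<close>
definition hausdorff_dist :: "'a::metric_space set \<Rightarrow> 'a set \<Rightarrow> real" where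
  "hausdorff_dist A B = max (SUP a\<in>A. infdist a B) (SUP b\<in>B. infdist b A)"

end

theory Submission
  imports Defs
begin

text \<open>
  Points of \<open>A\<close> have the form \<open>M t + y e\<^sub>0\<close> with \<open>t\<close> in the simplex and \<open>y = E(t)\<close>, and by
  orthonormality two such points are at squared distance \<open>(y - y')\<^sup>2 + M\<^sup>2 |t - t'|\<^sup>2\<close>.
  A convex combination of two points of this graph lies vertically within \<open>1\<close> of it, because
  \<open>E\<close> is concave and exceeds its chords by at most the binary entropy of the weights, which is
  at most one bit. The convex hull lies in the slab \<open>0 \<le> y \<le> log\<^sub>2 n\<close>, hence within \<open>log\<^sub>2 n\<close>
  of \<open>A\<close>. Conversely, the barycenter of the vertices \<open>M e\<^sub>i\<close> has height \<open>0\<close>, and a point of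
  \<open>A\<close> high enough to be close to it vertically has \<open>t\<close> far from the barycenter of the simplex,
  since \<open>log\<^sub>2 n - E(t) \<le> (n / ln 2) |t - 1/n|\<^sup>2\<close>; the value of \<open>M\<close> makes both alternatives
  cost distance at least \<open>log\<^sub>2 n\<close>.
\<close>

lemma mult_ln_le_diff:
  fixes a m :: real
  assumes "0 \<le> a" "0 < m"
  shows "a * ln m - a * ln a \<le> m - a"
proof (cases "a = 0")
  case False
  then have a: "a > 0" using assms by simp
  have "a * ln (m / a) \<le> a * (m / a - 1)"
    using ln_le_minus_one[of "m / a"] a assms by (intro mult_left_mono) auto
  then show ?thesis using a assms by (simp add: ln_div algebra_simps)
qed (use assms in simp)

lemma xlnx_convex_comb_le:
  fixes a b l :: real
  assumes "0 \<le> a" "0 \<le> b" "0 \<le> l" "l \<le> 1"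
  shows "(l * a + (1 - l) * b) * ln (l * a + (1 - l) * b) \<le> l * (a * ln a) + (1 - l) * (b * ln b)"
proof -
  define m where "m = l * a + (1 - l) * b"
  show ?thesis
  proof (cases "m = 0")
    case True
    then have "l * a = 0" "(1 - l) * b = 0"
      using assms unfolding m_def by (simp_all add: add_nonneg_eq_0_iff)
    then show ?thesis using True unfolding m_def by auto
  next
    case False
    moreover have "m \<ge> 0" using assms by (simp add: m_def)
    ultimately have m: "m > 0" by simp
    have "l * (a * ln m - a * ln a) \<le> l * (m - a)"
      "(1 - l) * (b * ln m - b * ln b) \<le> (1 - l) * (m - b)"
      using mult_ln_le_diff[OF _ m] assms by (simp_all add: mult_left_mono)
    moreover have "l * (m - a) + (1 - l) * (m - b) = 0" unfolding m_def by (simp add: algebra_simps)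
    ultimately show ?thesis by (simp add: m_def algebra_simps)
  qed
qed

lemma xlnx_le_xlnx_add:
  fixes p q :: real
  assumes "0 \<le> p" "0 \<le> q"
  shows "p * ln p \<le> p * ln (p + q)"
  using assms by (cases "p = 0") (auto intro: mult_left_mono)

lemma xlnx_mult:
  fixes l a :: real
  assumes "0 \<le> l" "0 \<le> a"
  shows "(l * a) * ln (l * a) = l * (a * ln a) + l * a * ln l"
  using assms by (cases "l = 0 \<or> a = 0") (auto simp: ln_mult algebra_simps)

lemma xlnx_convex_comb_defect_le:
  fixes a b l :: real
  assumes "0 \<le> a" "0 \<le> b" "0 \<le> l" "l \<le> 1"
  shows "l * (a * ln a) + (1 - l) * (b * ln b) - (l * a + (1 - l) * b) * ln (l * a + (1 - l) * b)
         \<le> - (l * a * ln l) - (1 - l) * b * ln (1 - l)"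
proof -
  have "(l * a) * ln (l * a) \<le> (l * a) * ln (l * a + (1 - l) * b)"
    using xlnx_le_xlnx_add[of "l * a" "(1 - l) * b"] assms by simp
  moreover have "((1 - l) * b) * ln ((1 - l) * b) \<le> ((1 - l) * b) * ln (l * a + (1 - l) * b)"
    using xlnx_le_xlnx_add[of "(1 - l) * b" "l * a"] assms by (simp add: add.commute)
  ultimately show ?thesis
    using xlnx_mult[of l a] xlnx_mult[of "1 - l" b] assms by (simp add: algebra_simps)
qed

lemma binary_entropy_le_ln2:
  fixes l :: real
  assumes "0 \<le> l" "l \<le> 1"
  shows "- (l * ln l) - (1 - l) * ln (1 - l) \<le> ln 2"
  using mult_ln_le_diff[of l "1/2"] mult_ln_le_diff[of "1 - l" "1/2"] assms
  by (simp add: ln_div algebra_simps)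

lemma std_simplex_nonneg: "t \<in> std_simplex n \<Longrightarrow> i \<in> {1..n} \<Longrightarrow> 0 \<le> t i"
  unfolding std_simplex_def by auto

lemma std_simplex_sum: "t \<in> std_simplex n \<Longrightarrow> (\<Sum>i=1..n. t i) = 1"
  unfolding std_simplex_def by auto

lemma std_simplex_le_one:
  assumes "t \<in> std_simplex n" "i \<in> {1..n}"
  shows "t i \<le> 1"
proof -
  have "t i \<le> (\<Sum>i=1..n. t i)"
    using assms std_simplex_nonneg by (intro member_le_sum) auto
  then show ?thesis using std_simplex_sum[OF assms(1)] by simp
qed

lemma std_simplex_dim_pos: "t \<in> std_simplex n \<Longrightarrow> n \<ge> 1"
  using std_simplex_sum[of t n] by (cases n) auto

lemma std_simplex_convex_comb:
  assumes "s \<in> std_simplex n" "t \<in> std_simplex n" "0 \<le> u" "0 \<le> v" "u + v = 1"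
  shows "(\<lambda>i. u * s i + v * t i) \<in> std_simplex n"
  using assms unfolding std_simplex_def by (auto simp: sum.distrib sum_distrib_left[symmetric])

lemma std_simplex_vertex: "j \<in> {1..n} \<Longrightarrow> (\<lambda>i. if i = j then 1 else 0) \<in> std_simplex n"
  unfolding std_simplex_def by auto

lemma std_simplex_sum_sq_diff_le:
  assumes s: "s \<in> std_simplex n" and t: "t \<in> std_simplex n"
  shows "(\<Sum>i=1..n. (s i - t i)^2) \<le> 2"
proof -
  have "(\<Sum>i=1..n. (s i - t i)^2) \<le> (\<Sum>i=1..n. s i + t i)"
  proof (rule sum_mono)
    fix i assume i: "i \<in> {1..n}"
    have "s i * s i \<le> s i" "t i * t i \<le> t i" "0 \<le> s i * t i"
      using std_simplex_nonneg[OF _ i] std_simplex_le_one[OF _ i] s t by (auto intro: mult_left_le)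
    then show "(s i - t i)^2 \<le> s i + t i" by (simp add: power2_eq_square algebra_simps)
  qed
  then show ?thesis using std_simplex_sum[OF s] std_simplex_sum[OF t] by (simp add: sum.distrib)
qed

text \<open>Since \<open>ln 0 = 0\<close> in Isabelle, the convention \<open>0 log\<^sub>2 (1/0) = 0\<close> needs no case split.\<close>
lemma entropy_eq_sum_xlnx:
  assumes "\<forall>i\<in>{1..n}. 0 \<le> t i"
  shows "entropy n t = - (\<Sum>i=1..n. t i * ln (t i)) / ln 2"
  unfolding entropy_def sum_divide_distrib sum_negf[symmetric]
  by (intro sum.cong refl) (simp add: log_def divide_inverse ln_inverse)

lemma entropy_nonneg:
  assumes t: "t \<in> std_simplex n"
  shows "0 \<le> entropy n t"
  unfolding entropy_def
proof (rule sum_nonneg)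
  fix i assume "i \<in> {1..n}"
  then have "0 \<le> t i" "t i \<le> 1" using std_simplex_nonneg std_simplex_le_one t by auto
  then show "0 \<le> (if t i = 0 then 0 else t i * log 2 (1 / t i))" by simp
qed

lemma entropy_vertex: "entropy n (\<lambda>i. if i = j then 1 else 0) = 0"
  unfolding entropy_def by (intro sum.neutral) auto

lemma log_minus_entropy_eq:
  assumes t: "t \<in> std_simplex n"
  shows "log 2 n - entropy n t = (\<Sum>i=1..n. t i * ln (n * t i)) / ln 2"
proof -
  have n: "real n > 0" using std_simplex_dim_pos[OF t] by simp
  have "(\<Sum>i=1..n. t i * ln (n * t i)) = (\<Sum>i=1..n. t i * ln n + t i * ln (t i))"
    using std_simplex_nonneg[OF t] n
    by (intro sum.cong refl) (fastforce simp: ln_mult algebra_simps)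
  also have "\<dots> = ln n + (\<Sum>i=1..n. t i * ln (t i))"
    using std_simplex_sum[OF t] by (simp add: sum.distrib sum_distrib_right[symmetric])
  finally show ?thesis
    using std_simplex_nonneg[OF t] by (simp add: entropy_eq_sum_xlnx log_def field_simps)
qed

text \<open>Gibbs' inequality, via \<open>x - 1/n \<le> x ln (n x)\<close>.\<close>
lemma entropy_le_log:
  assumes t: "t \<in> std_simplex n"
  shows "entropy n t \<le> log 2 n"
proof -
  have n: "real n > 0" using std_simplex_dim_pos[OF t] by simp
  have "(\<Sum>i=1..n. t i - 1 / n) \<le> (\<Sum>i=1..n. t i * ln (n * t i))"
  proof (rule sum_mono)
    fix i assume "i \<in> {1..n}"
    then have "0 \<le> t i" using std_simplex_nonneg t by blast
    then show "t i - 1 / n \<le> t i * ln (n * t i)"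
      using mult_ln_le_diff[of "t i" "1 / n"] n by (cases "t i = 0") (auto simp: ln_mult ln_div algebra_simps)
  qed
  moreover have "(\<Sum>i=1..n. t i - 1 / n) = 0" using std_simplex_sum[OF t] n by (simp add: sum_subtractf)
  ultimately have "0 \<le> (\<Sum>i=1..n. t i * ln (n * t i)) / ln 2" by simp
  then show ?thesis using log_minus_entropy_eq[OF t] by simp
qed

text \<open>Sum \<open>x ln (n x) \<le> n x\<^sup>2 - x\<close> over the coordinates.\<close>
lemma log_minus_entropy_le:
  assumes t: "t \<in> std_simplex n"
  shows "log 2 n - entropy n t \<le> n / ln 2 * (\<Sum>i=1..n. (t i - 1 / n)^2)"
proof -
  have n: "real n > 0" using std_simplex_dim_pos[OF t] by simp
  have "(\<Sum>i=1..n. t i * ln (n * t i)) \<le> (\<Sum>i=1..n. n * (t i)^2 - t i)"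
  proof (rule sum_mono)
    fix i assume "i \<in> {1..n}"
    then have "0 \<le> t i" using std_simplex_nonneg t by blast
    then show "t i * ln (n * t i) \<le> n * (t i)^2 - t i"
      using ln_le_minus_one[of "n * t i"] n
      by (cases "t i = 0") (auto simp: power2_eq_square algebra_simps dest: mult_left_mono)
  qed
  also have "\<dots> = n * (\<Sum>i=1..n. (t i)^2) - 1"
    using std_simplex_sum[OF t] by (simp add: sum_subtractf sum_distrib_left)
  also have "\<dots> = n * (\<Sum>i=1..n. (t i - 1 / n)^2)"
  proof -
    have "(\<Sum>i=1..n. (t i - 1 / n)^2) = (\<Sum>i=1..n. (t i)^2) - 2 / n * (\<Sum>i=1..n. t i) + n / n^2"
      by (simp add: power2_diff sum.distrib sum_subtractf sum_distrib_left sum_divide_distrib power_divide algebra_simps)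
    then show ?thesis using std_simplex_sum[OF t] n by (simp add: power2_eq_square field_simps)
  qed
  finally show ?thesis using log_minus_entropy_eq[OF t] by (simp add: divide_right_mono)
qed

lemma entropy_concave:
  assumes s: "\<forall>i\<in>{1..n}. 0 \<le> s i" and t: "\<forall>i\<in>{1..n}. 0 \<le> t i" and l: "0 \<le> l" "l \<le> 1"
  shows "l * entropy n s + (1 - l) * entropy n t \<le> entropy n (\<lambda>i. l * s i + (1 - l) * t i)"
proof -
  define c where "c i = l * s i + (1 - l) * t i" for i
  define X where "X u = (\<Sum>i=1..n. u i * ln (u i))" for u :: "nat \<Rightarrow> real"
  have c: "\<forall>i\<in>{1..n}. 0 \<le> c i" using s t l unfolding c_def by simp
  have E: "entropy n u * ln 2 = - X u" if "\<forall>i\<in>{1..n}. 0 \<le> u i" for u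
    using entropy_eq_sum_xlnx[OF that] unfolding X_def by simp
  have "X c \<le> (\<Sum>i=1..n. l * (s i * ln (s i)) + (1 - l) * (t i * ln (t i)))"
    unfolding X_def c_def using xlnx_convex_comb_le s t l by (intro sum_mono) auto
  also have "\<dots> = l * X s + (1 - l) * X t"
    unfolding X_def by (simp add: sum.distrib sum_distrib_left)
  also have "\<dots> = - ((l * entropy n s + (1 - l) * entropy n t) * ln 2)"
    using E[OF s] E[OF t] by (simp add: algebra_simps)
  finally have "(l * entropy n s + (1 - l) * entropy n t) * ln 2 \<le> entropy n c * ln 2"
    using E[OF c] by linarith
  then show ?thesis unfolding c_def by simp
qed

text \<open>Mixing two distributions raises the entropy by at most the binary entropy of the weights.\<close>
lemma entropy_convex_comb_le:
  assumes s: "s \<in> std_simplex n" and t: "t \<in> std_simplex n" and l: "0 \<le> l" "l \<le> 1"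
  shows "entropy n (\<lambda>i. l * s i + (1 - l) * t i) \<le> l * entropy n s + (1 - l) * entropy n t + 1"
proof -
  define c where "c i = l * s i + (1 - l) * t i" for i
  define X where "X u = (\<Sum>i=1..n. u i * ln (u i))" for u :: "nat \<Rightarrow> real"
  have nonneg: "\<forall>i\<in>{1..n}. 0 \<le> s i" "\<forall>i\<in>{1..n}. 0 \<le> t i" "\<forall>i\<in>{1..n}. 0 \<le> c i"
    using std_simplex_nonneg s t l unfolding c_def by auto
  have E: "entropy n u * ln 2 = - X u" if "\<forall>i\<in>{1..n}. 0 \<le> u i" for u
    using entropy_eq_sum_xlnx[OF that] unfolding X_def by simp
  have "(entropy n c - (l * entropy n s + (1 - l) * entropy n t)) * ln 2 = l * X s + (1 - l) * X t - X c"
    using E[OF nonneg(1)] E[OF nonneg(2)] E[OF nonneg(3)] by (simp add: algebra_simps)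
  also have "\<dots> = (\<Sum>i=1..n. l * (s i * ln (s i)) + (1 - l) * (t i * ln (t i)) - c i * ln (c i))"
    unfolding X_def by (simp add: sum.distrib sum_subtractf sum_distrib_left)
  also have "\<dots> \<le> (\<Sum>i=1..n. - (l * s i * ln l) - (1 - l) * t i * ln (1 - l))"
    unfolding c_def using xlnx_convex_comb_defect_le nonneg l by (intro sum_mono) auto
  also have "\<dots> = - (l * ln l) - (1 - l) * ln (1 - l)"
    using std_simplex_sum[OF s] std_simplex_sum[OF t]
    by (simp add: sum_subtractf sum_negf mult.assoc flip: sum_distrib_left sum_distrib_right)
  also have "\<dots> \<le> 1 * ln 2" using binary_entropy_le_ln2 l by simp
  finally show ?thesis unfolding c_def by simp
qed

lemma hausdorff_dist_eqI:
  fixes A B :: "'a::metric_space set"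
  assumes "A \<subseteq> B" "A \<noteq> {}"
    and le: "\<And>b. b \<in> B \<Longrightarrow> infdist b A \<le> r" and c: "c \<in> B" "r \<le> infdist c A"
  shows "hausdorff_dist A B = r"
proof -
  have "(SUP a\<in>A. infdist a B) = 0"
    using assms(1,2) by (simp add: subset_eq)
  moreover have "(SUP b\<in>B. infdist b A) = r"
  proof (rule antisym)
    show "(SUP b\<in>B. infdist b A) \<le> r" using c le by (intro cSUP_least) auto
    have "bdd_above ((\<lambda>b. infdist b A) ` B)" using le by (intro bdd_aboveI2)
    then show "r \<le> (SUP b\<in>B. infdist b A)" using c by (meson cSUP_upper order_trans)
  qed
  moreover have "0 \<le> r" using c le by (meson infdist_nonneg order_trans)
  ultimately show ?thesis unfolding hausdorff_dist_def by simp
qed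

definition orthonormal_upto :: "nat \<Rightarrow> (nat \<Rightarrow> 'a::real_inner) \<Rightarrow> bool" where
  "orthonormal_upto n e \<longleftrightarrow> (\<forall>i\<in>{0..n}. \<forall>j\<in>{0..n}. e i \<bullet> e j = (if i = j then 1 else 0))"

definition lift_point :: "nat \<Rightarrow> (nat \<Rightarrow> 'a::real_vector) \<Rightarrow> real \<Rightarrow> real \<Rightarrow> (nat \<Rightarrow> real) \<Rightarrow> 'a" where
  "lift_point n e M y t = M *\<^sub>R (\<Sum>i=1..n. t i *\<^sub>R e i) + y *\<^sub>R e 0"

definition entropy_graph :: "nat \<Rightarrow> (nat \<Rightarrow> 'a::real_vector) \<Rightarrow> real \<Rightarrow> 'a set" where
  "entropy_graph n e M = (\<lambda>t. lift_point n e M (entropy n t) t) ` std_simplex n"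

lemma lift_point_linear_comb:
  "u *\<^sub>R lift_point n e M y t + v *\<^sub>R lift_point n e M y' t'
   = lift_point n e M (u * y + v * y') (\<lambda>i. u * t i + v * t' i)"
  unfolding lift_point_def by (simp add: scaleR_sum_right sum.distrib scaleR_add_left algebra_simps)

lemma lift_point_diff:
  "lift_point n e M y t - lift_point n e M y' t' = lift_point n e M (y - y') (\<lambda>i. t i - t' i)"
  unfolding lift_point_def by (simp add: scaleR_sum_right sum_subtractf scaleR_diff_left algebra_simps)

lemma norm_lift_point_sq:
  assumes orth: "orthonormal_upto n e"
  shows "(norm (lift_point n e M y t))\<^sup>2 = y\<^sup>2 + M\<^sup>2 * (\<Sum>i=1..n. (t i)\<^sup>2)"
proof -
  define v where "v = (\<Sum>i=1..n. t i *\<^sub>R e i)"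
  have unit: "(norm (e i))\<^sup>2 = 1" if "i \<in> {0..n}" for i
    using orth that by (simp add: orthonormal_upto_def power2_norm_eq_inner)
  have "(norm v)\<^sup>2 = (\<Sum>i=1..n. (norm (t i *\<^sub>R e i))\<^sup>2)"
    unfolding v_def using orth
    by (intro norm_sum_Pythagorean) (auto simp: orthonormal_upto_def pairwise_def orthogonal_def)
  also have "\<dots> = (\<Sum>i=1..n. (t i)\<^sup>2)"
    using unit by (intro sum.cong refl) (simp add: power_mult_distrib)
  finally have v: "(norm v)\<^sup>2 = (\<Sum>i=1..n. (t i)\<^sup>2)" .
  have "orthogonal (M *\<^sub>R v) (y *\<^sub>R e 0)"
    unfolding v_def orthogonal_def using orth by (simp add: orthonormal_upto_def inner_sum_left)
  then show ?thesis
    unfolding lift_point_def v_def[symmetric] using v unit[of 0]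
    by (simp add: norm_add_Pythagorean power_mult_distrib)
qed

lemma dist_lift_point_sq:
  assumes "orthonormal_upto n e"
  shows "(dist (lift_point n e M y t) (lift_point n e M y' t'))\<^sup>2
         = (y - y')\<^sup>2 + M\<^sup>2 * (\<Sum>i=1..n. (t i - t' i)\<^sup>2)"
  by (simp add: dist_norm lift_point_diff norm_lift_point_sq[OF assms])

lemma dist_lift_point_vertical:
  assumes "orthonormal_upto n e"
  shows "dist (lift_point n e M y t) (lift_point n e M y' t) = \<bar>y - y'\<bar>"
proof -
  have "sqrt ((dist (lift_point n e M y t) (lift_point n e M y' t))\<^sup>2) = sqrt ((y - y')\<^sup>2)"
    using dist_lift_point_sq[OF assms, of M y t y' t] by simp
  then show ?thesis by simp
qed

lemma approx_convex_entropy_graph: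
  assumes orth: "orthonormal_upto n e"
  shows "approx_convex (entropy_graph n e M)"
  unfolding approx_convex_def
proof (intro ballI)
  fix x z and l :: real
  assume "x \<in> entropy_graph n e M" "z \<in> entropy_graph n e M" and l: "l \<in> {0..1}"
  then obtain s t where s: "s \<in> std_simplex n" and t: "t \<in> std_simplex n"
    and xz: "x = lift_point n e M (entropy n s) s" "z = lift_point n e M (entropy n t) t"
    unfolding entropy_graph_def by auto
  define c where "c = (\<lambda>i. l * s i + (1 - l) * t i)"
  define y where "y = l * entropy n s + (1 - l) * entropy n t"
  have c: "c \<in> std_simplex n" unfolding c_def using std_simplex_convex_comb s t l by auto
  have "l *\<^sub>R x + (1 - l) *\<^sub>R z = lift_point n e M y c"
    unfolding xz c_def y_def lift_point_linear_comb ..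
  moreover have "\<bar>entropy n c - y\<bar> \<le> 1"
    using entropy_concave[of n s t l] entropy_convex_comb_le[OF s t, of l] std_simplex_nonneg s t l
    unfolding c_def y_def by auto
  then have "dist (lift_point n e M y c) (lift_point n e M (entropy n c) c) \<le> 1"
    by (simp add: dist_lift_point_vertical[OF orth])
  moreover have "lift_point n e M (entropy n c) c \<in> entropy_graph n e M"
    unfolding entropy_graph_def using c by blast
  ultimately show "infdist (l *\<^sub>R x + (1 - l) *\<^sub>R z) (entropy_graph n e M) \<le> 1"
    by (metis infdist_le2)
qed

lemma infdist_convex_hull_entropy_graph_le:
  assumes orth: "orthonormal_upto n e"
    and b: "b \<in> convex hull (entropy_graph n e M)"
  shows "infdist b (entropy_graph n e M) \<le> log 2 n"
proof -
  define slab where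
    "slab = {lift_point n e M y t | y t. t \<in> std_simplex n \<and> 0 \<le> y \<and> y \<le> log 2 n}"
  have "convex slab"
    unfolding convex_def
  proof (intro ballI allI impI)
    fix x z and u v :: real
    assume "x \<in> slab" "z \<in> slab" and uv: "0 \<le> u" "0 \<le> v" "u + v = 1"
    then obtain y t y' t' where x: "x = lift_point n e M y t" "t \<in> std_simplex n" "0 \<le> y" "y \<le> log 2 n"
      and z: "z = lift_point n e M y' t'" "t' \<in> std_simplex n" "0 \<le> y'" "y' \<le> log 2 n"
      unfolding slab_def by auto
    have "u * y + v * y' \<le> u * log 2 n + v * log 2 n"
      using x z uv by (intro add_mono mult_left_mono) auto
    then have "u * y + v * y' \<le> log 2 n" using uv by (simp flip: distrib_right)
    moreover have "0 \<le> u * y + v * y'" using x z uv by simp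
    ultimately show "u *\<^sub>R x + v *\<^sub>R z \<in> slab"
      unfolding x z lift_point_linear_comb slab_def using std_simplex_convex_comb[OF x(2) z(2) uv] by blast
  qed
  moreover have "entropy_graph n e M \<subseteq> slab"
    unfolding entropy_graph_def slab_def using entropy_nonneg entropy_le_log by blast
  ultimately have "b \<in> slab" using b hull_minimal[of "entropy_graph n e M" slab convex] by blast
  then obtain y t where bt: "b = lift_point n e M y t" "t \<in> std_simplex n" "0 \<le> y" "y \<le> log 2 n"
    unfolding slab_def by auto
  have "dist b (lift_point n e M (entropy n t) t) \<le> log 2 n"
    using bt entropy_nonneg[OF bt(2)] entropy_le_log[OF bt(2)]
    by (simp add: dist_lift_point_vertical[OF orth])
  moreover have "lift_point n e M (entropy n t) t \<in> entropy_graph n e M"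
    unfolding entropy_graph_def using bt by blast
  ultimately show ?thesis by (metis infdist_le2)
qed

lemma vertex_in_entropy_graph:
  "j \<in> {1..n} \<Longrightarrow> M *\<^sub>R e j \<in> entropy_graph n e M"
proof -
  assume j: "j \<in> {1..n}"
  let ?\<delta> = "\<lambda>i. if i = j then 1 else (0::real)"
  have "(\<Sum>i=1..n. ?\<delta> i *\<^sub>R e i) = (\<Sum>i=1..n. if i = j then e i else 0)"
    by (intro sum.cong) auto
  also have "\<dots> = e j" using j by simp
  finally have "(\<Sum>i=1..n. ?\<delta> i *\<^sub>R e i) = e j" .
  then have "M *\<^sub>R e j = lift_point n e M (entropy n ?\<delta>) ?\<delta>"
    by (simp add: lift_point_def entropy_vertex)
  then show ?thesis unfolding entropy_graph_def using std_simplex_vertex[OF j] by blast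
qed

lemma barycenter_in_convex_hull_entropy_graph:
  assumes "n \<ge> 1"
  shows "lift_point n e M 0 (\<lambda>_. 1 / n) \<in> convex hull (entropy_graph n e M)"
proof -
  have "lift_point n e M 0 (\<lambda>_. 1 / n) = (\<Sum>j=1..n. (1 / n) *\<^sub>R (M *\<^sub>R e j))"
    by (simp add: lift_point_def scaleR_sum_right)
  also have "\<dots> \<in> convex hull (entropy_graph n e M)"
  proof (rule convex_sum)
    show "M *\<^sub>R e j \<in> convex hull (entropy_graph n e M)" if "j \<in> {1..n}" for j
      using vertex_in_entropy_graph[OF that] by (rule hull_inc)
  qed (use assms in auto)
  finally show ?thesis .
qed

lemma infdist_barycenter_entropy_graph_ge:
  assumes orth: "orthonormal_upto n e"
    and n: "n \<ge> 1" and M: "2 / ln 2 * n * log 2 n \<le> M\<^sup>2"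
  shows "log 2 n \<le> infdist (lift_point n e M 0 (\<lambda>_. 1 / n)) (entropy_graph n e M)"
proof -
  have ne: "entropy_graph n e M \<noteq> {}" using vertex_in_entropy_graph[of 1 n] n by auto
  show ?thesis
    unfolding infdist_notempty[OF ne]
  proof (rule cINF_greatest[OF ne])
    fix a assume "a \<in> entropy_graph n e M"
    then obtain t where t: "t \<in> std_simplex n" and a: "a = lift_point n e M (entropy n t) t"
      unfolding entropy_graph_def by auto
    define L where "L = log 2 (real n)"
    define Q where "Q = (\<Sum>i=1..n. (t i - 1 / n)\<^sup>2)"
    have E: "0 \<le> entropy n t" "entropy n t \<le> L" "L - entropy n t \<le> n / ln 2 * Q"
      using entropy_nonneg[OF t] entropy_le_log[OF t] log_minus_entropy_le[OF t] unfolding L_def Q_def by auto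
    have "L\<^sup>2 - (entropy n t)\<^sup>2 = (L - entropy n t) * (L + entropy n t)"
      by (simp add: power2_eq_square algebra_simps)
    also have "\<dots> \<le> (n / ln 2 * Q) * (2 * L)"
      using E by (intro mult_mono) auto
    also have "\<dots> = (2 / ln 2 * n * L) * Q" by simp
    also have "\<dots> \<le> M\<^sup>2 * Q"
      using M unfolding L_def Q_def by (intro mult_right_mono sum_nonneg) auto
    finally have "L\<^sup>2 \<le> (dist (lift_point n e M 0 (\<lambda>_. 1 / n)) a)\<^sup>2"
      unfolding a dist_lift_point_sq[OF orth] Q_def by (simp add: power2_commute)
    then show "log 2 n \<le> dist (lift_point n e M 0 (\<lambda>_. 1 / n)) a"
      unfolding L_def by (rule power2_le_imp_le) simp
  qed
qed

lemma diameter_entropy_graph_le: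
  assumes orth: "orthonormal_upto n e"
  shows "diameter (entropy_graph n e M) \<le> sqrt 2 * \<bar>M\<bar> + log 2 n"
proof (rule diameter_le)
  have "0 \<le> log 2 (real n)" by (cases "n = 0") (auto simp: log_def)
  then show "entropy_graph n e M \<noteq> {} \<or> 0 \<le> sqrt 2 * \<bar>M\<bar> + log 2 n" by simp
  fix x z assume "x \<in> entropy_graph n e M" "z \<in> entropy_graph n e M"
  then obtain s t where s: "s \<in> std_simplex n" and t: "t \<in> std_simplex n"
    and xz: "x = lift_point n e M (entropy n s) s" "z = lift_point n e M (entropy n t) t"
    unfolding entropy_graph_def by auto
  have "\<bar>entropy n s - entropy n t\<bar> \<le> log 2 n"
    using entropy_nonneg[OF s] entropy_le_log[OF s] entropy_nonneg[OF t] entropy_le_log[OF t]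
    unfolding abs_le_iff by linarith
  then have "(entropy n s - entropy n t)\<^sup>2 \<le> (log 2 n)\<^sup>2"
    using power_mono[OF _ abs_ge_zero, of _ _ 2] by fastforce
  moreover have "M\<^sup>2 * (\<Sum>i=1..n. (s i - t i)\<^sup>2) \<le> M\<^sup>2 * 2"
    using std_simplex_sum_sq_diff_le[OF s t] by (intro mult_left_mono) auto
  ultimately have "(norm (x - z))\<^sup>2 \<le> (log 2 n)\<^sup>2 + (sqrt 2 * \<bar>M\<bar>)\<^sup>2"
    using dist_lift_point_sq[OF orth] unfolding xz dist_norm[symmetric]
    by (simp add: power_mult_distrib)
  also have "\<dots> \<le> (sqrt 2 * \<bar>M\<bar> + log 2 n)\<^sup>2"
    using \<open>0 \<le> log 2 (real n)\<close> by (simp add: power2_sum)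
  finally show "norm (x - z) \<le> sqrt 2 * \<bar>M\<bar> + log 2 n"
    by (rule power2_le_imp_le) (use \<open>0 \<le> log 2 (real n)\<close> in simp)
qed

theorem theorem5p4:
  fixes n :: nat and e :: "nat \<Rightarrow> 'a::euclidean_space" and M :: real and A :: "'a set"
  assumes n4: "n \<ge> 4"
    and dim: "DIM('a) = n + 1"
    and orthonormal: "\<forall>i\<in>{0..n}. \<forall>j\<in>{0..n}. e i \<bullet> e j = (if i = j then 1 else 0)"
    and M_def: "M = sqrt ((2 / ln 2) * real n * log 2 (real n))"
    and A_def: "A = (\<lambda>t. M *\<^sub>R (\<Sum>i=1..n. t i *\<^sub>R e i) + entropy n t *\<^sub>R e 0) ` std_simplex n"
  shows "approx_convex A
         \<and> hausdorff_dist A (convex hull A) = log 2 (real n)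
         \<and> diameter A \<le> 2 / sqrt (ln 2) * sqrt (real n * log 2 (real n)) + log 2 (real n)"
proof -
  have n1: "n \<ge> 1" using n4 by simp
  have orth: "orthonormal_upto n e" using orthonormal unfolding orthonormal_upto_def .
  have log_nonneg: "0 \<le> log 2 (real n)" using n1 by simp
  have graph: "A = entropy_graph n e M"
    unfolding A_def entropy_graph_def lift_point_def ..
  have M2: "M\<^sup>2 = 2 / ln 2 * n * log 2 n"
    unfolding M_def using log_nonneg by simp
  have "sqrt 2 * \<bar>M\<bar> = sqrt (2 * M\<^sup>2)" by (simp add: real_sqrt_mult)
  also have "\<dots> = sqrt (2\<^sup>2 * (n * log 2 n) / ln 2)" unfolding M2 by (simp add: power2_eq_square)
  also have "\<dots> = 2 / sqrt (ln 2) * sqrt (real n * log 2 n)"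
    by (simp add: real_sqrt_mult real_sqrt_divide)
  finally have diam: "sqrt 2 * \<bar>M\<bar> = 2 / sqrt (ln 2) * sqrt (real n * log 2 n)" .
  have "hausdorff_dist A (convex hull A) = log 2 n"
    unfolding graph
  proof (rule hausdorff_dist_eqI[OF hull_subset])
    show "entropy_graph n e M \<noteq> {}" using vertex_in_entropy_graph[of 1 n] n1 by auto
    show "infdist b (entropy_graph n e M) \<le> log 2 n" if "b \<in> convex hull entropy_graph n e M" for b
      using infdist_convex_hull_entropy_graph_le[OF orth that] .
    show "lift_point n e M 0 (\<lambda>_. 1 / n) \<in> convex hull entropy_graph n e M"
      using barycenter_in_convex_hull_entropy_graph[OF n1] .
    show "log 2 n \<le> infdist (lift_point n e M 0 (\<lambda>_. 1 / n)) (entropy_graph n e M)"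
      using infdist_barycenter_entropy_graph_ge[OF orth n1] M2 by simp
  qed
  then show ?thesis
    using approx_convex_entropy_graph[OF orth] diameter_entropy_graph_le[OF orth, of M]
    unfolding graph diam by simp
qed

end
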